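(* Let $A$ be a total ring of fractions, $f:A\to B$ a ring homomorphism, and $\mathfrak b$ an ideal of $B$ contained in the Jacobson radical of $B$. Let $A\bowtie^f\mathfrak b:=\{(a,f(a)+b): a\in A,\ b\in\mathfrak b\}\subseteq A\times B$. Assume at least one of the following: (a) $\mathfrak b\subseteq f(A)$; (b) $\mathfrak b$ is a torsion $A$-module (with the $A$-module structure induced by $f$). Then $A\bowtie^f\mathfrak b$ is a total ring of fractions; in particular it is a Prüfer ring.
   Context: All rings are commutative with identity. A ring is a total ring of fractions if every element is either a unit or a zerodivisor. $\mathfrak b$ is an $A$-module via $a\cdot x:=f(a)x$; it is torsion if every $x\in\mathfrak b$ is annihilated by some non-zerodivisor of $A$. A ring is a Prüfer ring if every finitely generated ideal containing a non-zerodivisor is invertible. *)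

theory Defs
  imports "HOL-Algebra.Chinese_Remainder" "HOL-Algebra.Ideal_Product"
begin

definition zerodivisor :: "('a, 'b) ring_scheme \<Rightarrow> 'a \<Rightarrow> bool" where
  "zerodivisor R x \<longleftrightarrow> x \<in> carrier R \<and>
     (\<exists>y \<in> carrier R. y \<noteq> \<zero>\<^bsub>R\<^esub> \<and> x \<otimes>\<^bsub>R\<^esub> y = \<zero>\<^bsub>R\<^esub>)"

definition non_zerodivisor :: "('a, 'b) ring_scheme \<Rightarrow> 'a \<Rightarrow> bool" where
  "non_zerodivisor R x \<longleftrightarrow> x \<in> carrier R \<and>
     (\<forall>y \<in> carrier R. x \<otimes>\<^bsub>R\<^esub> y = \<zero>\<^bsub>R\<^esub> \<longrightarrow> y = \<zero>\<^bsub>R\<^esub>)"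

definition total_ring_of_fractions :: "('a, 'b) ring_scheme \<Rightarrow> bool" where
  "total_ring_of_fractions R \<longleftrightarrow> cring R \<and>
     (\<forall>x \<in> carrier R. x \<in> Units R \<or> zerodivisor R x)"

definition jacobson_radical :: "('a, 'b) ring_scheme \<Rightarrow> 'a set" where
  "jacobson_radical R = \<Inter> {M. maximalideal M R}"

definition amalgamation ::
  "('a, 'c) ring_scheme \<Rightarrow> ('b, 'd) ring_scheme \<Rightarrow> ('a \<Rightarrow> 'b) \<Rightarrow> 'b set \<Rightarrow> ('a \<times> 'b) ring" where
  "amalgamation A B f J = (RDirProd A B)
     \<lparr> carrier := {(a, f a \<oplus>\<^bsub>B\<^esub> j) | a j. a \<in> carrier A \<and> j \<in> J} \<rparr>"

definition torsion_via :: "('a, 'c) ring_scheme \<Rightarrow> ('b, 'd) ring_scheme \<Rightarrow> ('a \<Rightarrow> 'b) \<Rightarrow> 'b set \<Rightarrow> bool" where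
  "torsion_via A B f J \<longleftrightarrow>
     (\<forall>x \<in> J. \<exists>s. non_zerodivisor A s \<and> f s \<otimes>\<^bsub>B\<^esub> x = \<zero>\<^bsub>B\<^esub>)"

text \<open>Invertible ideal, via the standard description without fractions:
  I J = dR for some ideal J and some non-zerodivisor d (then d^{-1} J is the inverse
  of I inside the total quotient ring).\<close>
definition invertible_ideal :: "('a, 'b) ring_scheme \<Rightarrow> 'a set \<Rightarrow> bool" where
  "invertible_ideal R I \<longleftrightarrow>
     (\<exists>J d. ideal J R \<and> non_zerodivisor R d \<and> I \<cdot>\<^bsub>R\<^esub> J = PIdl\<^bsub>R\<^esub> d)"

definition pruefer_ring :: "('a, 'b) ring_scheme \<Rightarrow> bool" where
  "pruefer_ring R \<longleftrightarrow> cring R \<and>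
     (\<forall>I. ideal I R \<and> (\<exists>S. finite S \<and> S \<subseteq> carrier R \<and> I = Idl\<^bsub>R\<^esub> S)
          \<and> (\<exists>d \<in> I. non_zerodivisor R d) \<longrightarrow> invertible_ideal R I)"

end

theory Submission
  imports Defs "HOL-Algebra.Subrings" "HOL-Algebra.Ring_Divisibility"
begin

text \<open>Let \<open>(a, f a + j)\<close> with \<open>j \<in> J\<close> be an element of the amalgamation. If \<open>a\<close> is a unit
  of \<open>A\<close>, then \<open>f a + j = f a (1 + f(a\<inverse>) j)\<close> is a unit of \<open>B\<close>, since \<open>J\<close> lies in the
  Jacobson radical; the pair of inverses lies in the amalgamation again. Otherwise \<open>a y = 0\<close>
  for some \<open>y \<noteq> 0\<close>, and a nonzero annihilator is built from \<open>y\<close>: if \<open>j = f c\<close>, one of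
  \<open>(y, f y)\<close> and \<open>(c y, 0)\<close> works according as \<open>c y = 0\<close> or not; if a non-zerodivisor
  \<open>s\<close> kills \<open>j\<close>, then \<open>(y s, f (y s))\<close> works. Finally, in a total ring of fractions every
  non-zerodivisor is a unit, so every regular ideal is the unit ideal.\<close>

lemma RDirProd_simps [simp]:
  "(a, b) \<otimes>\<^bsub>RDirProd A B\<^esub> (c, d) = (a \<otimes>\<^bsub>A\<^esub> c, b \<otimes>\<^bsub>B\<^esub> d)"
  "(a, b) \<oplus>\<^bsub>RDirProd A B\<^esub> (c, d) = (a \<oplus>\<^bsub>A\<^esub> c, b \<oplus>\<^bsub>B\<^esub> d)"
  "\<zero>\<^bsub>RDirProd A B\<^esub> = (\<zero>\<^bsub>A\<^esub>, \<zero>\<^bsub>B\<^esub>)"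
  "\<one>\<^bsub>RDirProd A B\<^esub> = (\<one>\<^bsub>A\<^esub>, \<one>\<^bsub>B\<^esub>)"
  by (simp_all add: RDirProd_def DirProd_def monoid.defs)

lemma RDirProd_minus:
  assumes "ring A" "ring B" "a \<in> carrier A" "b \<in> carrier B"
  shows "\<ominus>\<^bsub>RDirProd A B\<^esub> (a, b) = (\<ominus>\<^bsub>A\<^esub> a, \<ominus>\<^bsub>B\<^esub> b)"
proof -
  interpret P: ring "RDirProd A B" using RDirProd_ring assms by blast
  interpret A: ring A by fact
  interpret B: ring B by fact
  show ?thesis
    by (rule P.minus_equality) (simp_all add: RDirProd_carrier assms A.l_neg B.l_neg)
qed

lemma amalgamation_simps [simp]:
  "monoid.mult (amalgamation A B f J) = monoid.mult (RDirProd A B)"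
  "add (amalgamation A B f J) = add (RDirProd A B)"
  "zero (amalgamation A B f J) = zero (RDirProd A B)"
  "one (amalgamation A B f J) = one (RDirProd A B)"
  by (simp_all add: amalgamation_def)

lemma (in cring) nonunit_in_maximalideal:
  assumes "a \<in> carrier R" "a \<notin> Units R"
  obtains M where "maximalideal M R" "a \<in> M"
proof -
  define \<I> where "\<I> = {I. ideal I R \<and> a \<in> I \<and> \<one> \<notin> I}"
  have "PIdl a \<in> \<I>"
    using ideal_eq_carrier_iff[OF assms(1)] assms cgenideal_ideal cgenideal_self
      ideal.one_imp_carrier unfolding \<I>_def by fastforce
  moreover have "\<Union>C \<in> \<I>" if "C \<noteq> {}" "subset.chain \<I> C" for C
  proof -
    have "C \<subseteq> \<I>" using that(2) unfolding pred_on.chain_def by blast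
    moreover have "subset.chain {I. ideal I R} C"
      using that(2) unfolding pred_on.chain_def \<I>_def by blast
    ultimately show ?thesis
      using chain_Union_is_ideal[of C] that(1) unfolding \<I>_def by auto
  qed
  ultimately obtain M where M: "M \<in> \<I>" "\<forall>I\<in>\<I>. M \<subseteq> I \<longrightarrow> I = M"
    using subset_Zorn_nonempty[of \<I>] by blast
  have "maximalideal M R"
  proof (rule maximalidealI)
    show "ideal M R" "carrier R \<noteq> M" using M(1) unfolding \<I>_def by auto
  next
    fix I assume I: "ideal I R" "M \<subseteq> I" "I \<subseteq> carrier R"
    show "I = M \<or> I = carrier R"
    proof (cases "\<one> \<in> I")
      case True then show ?thesis using ideal.one_imp_carrier[OF I(1)] by blast
    next
      case False then show ?thesis using I M unfolding \<I>_def by blast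
    qed
  qed
  then show thesis using that M(1) unfolding \<I>_def by blast
qed

lemma (in cring) Units_add_jacobson_radical:
  assumes "u \<in> Units R" "x \<in> jacobson_radical R" "x \<in> carrier R"
  shows "u \<oplus> x \<in> Units R"
proof (rule ccontr)
  assume "u \<oplus> x \<notin> Units R"
  then obtain M where M: "maximalideal M R" "u \<oplus> x \<in> M"
    using nonunit_in_maximalideal assms by blast
  interpret M: maximalideal M R by fact
  have "x \<in> M" using assms(2) M(1) unfolding jacobson_radical_def by blast
  have uc: "u \<in> carrier R" using assms(1) by blast
  have "u = (u \<oplus> x) \<oplus> \<ominus> x" using uc assms(3) by algebra
  also have "\<dots> \<in> M" using M(2) \<open>x \<in> M\<close> by blast
  finally have "inv u \<otimes> u \<in> M" using assms(1) by (blast intro: M.I_l_closed)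
  then have "\<one> \<in> M" using assms(1) by simp
  then show False using M.one_imp_carrier M.I_notcarr by blast
qed

lemma total_ring_of_fractions_non_zerodivisor_Units:
  assumes "total_ring_of_fractions R" "non_zerodivisor R d"
  shows "d \<in> Units R"
  using assms unfolding total_ring_of_fractions_def non_zerodivisor_def zerodivisor_def by blast

lemma total_ring_of_fractions_imp_pruefer_ring:
  assumes "total_ring_of_fractions R"
  shows "pruefer_ring R"
  unfolding pruefer_ring_def
proof (intro conjI allI impI)
  interpret cring R using assms unfolding total_ring_of_fractions_def by blast
  show "cring R" by (rule is_cring)
  fix I assume "ideal I R \<and> (\<exists>S. finite S \<and> S \<subseteq> carrier R \<and> I = Idl\<^bsub>R\<^esub> S) \<and> (\<exists>d\<in>I. non_zerodivisor R d)"
  then obtain d where I: "ideal I R" "d \<in> I" "non_zerodivisor R d" by blast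
  have "d \<in> Units R" using total_ring_of_fractions_non_zerodivisor_Units assms I(3) .
  then have "\<one>\<^bsub>R\<^esub> \<in> I" using ideal.I_l_closed[OF I(1,2), of "inv\<^bsub>R\<^esub> d"] by simp
  then have "I = carrier R" using ideal.one_imp_carrier[OF I(1)] by blast
  moreover have "PIdl\<^bsub>R\<^esub> \<one>\<^bsub>R\<^esub> = carrier R" unfolding cgenideal_def by force
  moreover have "non_zerodivisor R \<one>\<^bsub>R\<^esub>" unfolding non_zerodivisor_def by simp
  ultimately show "invertible_ideal R I"
    unfolding invertible_ideal_def using ideal_prod_one[OF I(1)] oneideal by metis
qed

locale amalgamation_data = ring_hom_cring A B f + J: ideal J B
  for A (structure) and B (structure) and f and J
begin

abbreviation "AJ \<equiv> amalgamation A B f J"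

lemma carrier_amalgamation:
  "carrier AJ = {(a, b). a \<in> carrier A \<and> b \<in> carrier B \<and> b \<ominus>\<^bsub>B\<^esub> f a \<in> J}"
proof -
  have "f a \<oplus>\<^bsub>B\<^esub> j \<ominus>\<^bsub>B\<^esub> f a = j" if "a \<in> carrier A" "j \<in> carrier B" for a j
    using that hom_closed by algebra
  moreover have "b = f a \<oplus>\<^bsub>B\<^esub> (b \<ominus>\<^bsub>B\<^esub> f a)" if "a \<in> carrier A" "b \<in> carrier B" for a b
    using that hom_closed by algebra
  ultimately show ?thesis
    unfolding amalgamation_def by (fastforce simp: J.Icarr)
qed

lemma cring_amalgamation: "cring AJ"
proof -
  interpret P: ring "RDirProd A B" using RDirProd_ring R.ring_axioms S.ring_axioms .
  have sub: "carrier AJ \<subseteq> carrier (RDirProd A B)"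
    by (auto simp: carrier_amalgamation RDirProd_carrier)
  have "subcring (carrier AJ) (RDirProd A B)"
  proof (rule P.subcringI[OF P.subringI[OF sub]])
    show "\<one>\<^bsub>RDirProd A B\<^esub> \<in> carrier AJ"
      by (simp add: carrier_amalgamation S.minus_eq S.r_neg)
  next
    fix x assume "x \<in> carrier AJ"
    then obtain a b where x: "x = (a, b)" "a \<in> carrier A" "b \<in> carrier B" "b \<ominus>\<^bsub>B\<^esub> f a \<in> J"
      by (auto simp: carrier_amalgamation)
    have "\<ominus>\<^bsub>B\<^esub> b \<ominus>\<^bsub>B\<^esub> f (\<ominus>\<^bsub>A\<^esub> a) = \<ominus>\<^bsub>B\<^esub> (b \<ominus>\<^bsub>B\<^esub> f a)"
      using x hom_closed[OF x(2)] by (simp add: hom_a_inv, algebra)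
    then show "\<ominus>\<^bsub>RDirProd A B\<^esub> x \<in> carrier AJ"
      using x by (simp add: RDirProd_minus R.ring_axioms S.ring_axioms carrier_amalgamation J.a_inv_closed)
  next
    fix x y assume "x \<in> carrier AJ" "y \<in> carrier AJ"
    then obtain a b c d where x: "x = (a, b)" "a \<in> carrier A" "b \<in> carrier B" "b \<ominus>\<^bsub>B\<^esub> f a \<in> J"
      and y: "y = (c, d)" "c \<in> carrier A" "d \<in> carrier B" "d \<ominus>\<^bsub>B\<^esub> f c \<in> J"
      by (auto simp: carrier_amalgamation)
    have "b \<otimes>\<^bsub>B\<^esub> d \<ominus>\<^bsub>B\<^esub> f (a \<otimes>\<^bsub>A\<^esub> c) =
        b \<otimes>\<^bsub>B\<^esub> (d \<ominus>\<^bsub>B\<^esub> f c) \<oplus>\<^bsub>B\<^esub> (b \<ominus>\<^bsub>B\<^esub> f a) \<otimes>\<^bsub>B\<^esub> f c"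
      using x y hom_closed[OF x(2)] hom_closed[OF y(2)] by (simp, algebra)
    then show "x \<otimes>\<^bsub>RDirProd A B\<^esub> y \<in> carrier AJ"
      using x y by (simp add: carrier_amalgamation J.I_l_closed J.I_r_closed)
    have "b \<oplus>\<^bsub>B\<^esub> d \<ominus>\<^bsub>B\<^esub> f (a \<oplus>\<^bsub>A\<^esub> c) = (b \<ominus>\<^bsub>B\<^esub> f a) \<oplus>\<^bsub>B\<^esub> (d \<ominus>\<^bsub>B\<^esub> f c)"
      using x y hom_closed[OF x(2)] hom_closed[OF y(2)] by (simp, algebra)
    then show "x \<oplus>\<^bsub>RDirProd A B\<^esub> y \<in> carrier AJ"
      using x y by (simp add: carrier_amalgamation)
    show "x \<otimes>\<^bsub>RDirProd A B\<^esub> y = y \<otimes>\<^bsub>RDirProd A B\<^esub> x"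
      using x y by (simp add: R.m_comm S.m_comm)
  qed
  then have "cring ((RDirProd A B) \<lparr> carrier := carrier AJ \<rparr>)"
    using P.subcring_iff[OF sub] by blast
  then show ?thesis
    by (simp add: amalgamation_def)
qed

lemma amalgamation_memE:
  assumes "(a, b) \<in> carrier AJ"
  obtains j where "a \<in> carrier A" "j \<in> J" "j \<in> carrier B" "b = f a \<oplus>\<^bsub>B\<^esub> j"
proof -
  obtain j where "a \<in> carrier A" "j \<in> J" "b = f a \<oplus>\<^bsub>B\<^esub> j"
    using assms unfolding amalgamation_def by auto
  then show thesis
    using that J.Icarr by blast
qed

lemma diagonal_in_amalgamation: "a \<in> carrier A \<Longrightarrow> (a, f a) \<in> carrier AJ"
  by (simp add: carrier_amalgamation S.minus_eq S.r_neg)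

lemma Units_amalgamation:
  assumes "J \<subseteq> jacobson_radical B" "a \<in> Units A" "(a, b) \<in> carrier AJ"
  shows "(a, b) \<in> Units AJ"
proof -
  obtain j where ab: "a \<in> carrier A" "j \<in> J" "j \<in> carrier B" "b = f a \<oplus>\<^bsub>B\<^esub> j"
    using assms(3) amalgamation_memE by blast
  obtain a' where a': "a' \<in> carrier A" "a' \<otimes>\<^bsub>A\<^esub> a = \<one>\<^bsub>A\<^esub>" "a \<otimes>\<^bsub>A\<^esub> a' = \<one>\<^bsub>A\<^esub>"
    using assms(2) unfolding Units_def by blast
  have fa': "f a' \<otimes>\<^bsub>B\<^esub> f a = \<one>\<^bsub>B\<^esub>" "f a \<otimes>\<^bsub>B\<^esub> f a' = \<one>\<^bsub>B\<^esub>"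
    using a' ab(1) by (simp_all flip: hom_mult)
  then have "f a \<in> Units B"
    using a'(1) ab(1) unfolding Units_def by blast
  then have "b \<in> Units B"
    using S.Units_add_jacobson_radical assms(1) ab by blast
  then obtain b' where b': "b' \<in> carrier B" "b' \<otimes>\<^bsub>B\<^esub> b = \<one>\<^bsub>B\<^esub>" "b \<otimes>\<^bsub>B\<^esub> b' = \<one>\<^bsub>B\<^esub>"
    unfolding Units_def by blast
  have "b' \<ominus>\<^bsub>B\<^esub> f a' = b' \<otimes>\<^bsub>B\<^esub> (f a' \<otimes>\<^bsub>B\<^esub> f a) \<ominus>\<^bsub>B\<^esub> (b' \<otimes>\<^bsub>B\<^esub> b) \<otimes>\<^bsub>B\<^esub> f a'"
    using fa' b' a'(1) by simp
  also have "\<dots> = \<ominus>\<^bsub>B\<^esub> (b' \<otimes>\<^bsub>B\<^esub> f a' \<otimes>\<^bsub>B\<^esub> j)"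
    unfolding ab(4) using ab a'(1) b'(1) hom_closed by algebra
  finally have "(a', b') \<in> carrier AJ"
    using a'(1) b'(1) ab hom_closed
    by (simp add: carrier_amalgamation J.I_l_closed J.a_inv_closed)
  moreover have "(a', b') \<otimes>\<^bsub>AJ\<^esub> (a, b) = \<one>\<^bsub>AJ\<^esub>" "(a, b) \<otimes>\<^bsub>AJ\<^esub> (a', b') = \<one>\<^bsub>AJ\<^esub>"
    using a' b' by simp_all
  ultimately show ?thesis
    using assms(3) unfolding Units_def by blast
qed

lemma zerodivisor_amalgamationI:
  assumes "(a, b) \<in> carrier AJ" "(y, z) \<in> carrier AJ" "y \<noteq> \<zero>\<^bsub>A\<^esub>"
    and "a \<otimes>\<^bsub>A\<^esub> y = \<zero>\<^bsub>A\<^esub>" "b \<otimes>\<^bsub>B\<^esub> z = \<zero>\<^bsub>B\<^esub>"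
  shows "zerodivisor AJ (a, b)"
proof -
  have "(y, z) \<noteq> \<zero>\<^bsub>AJ\<^esub>" "(a, b) \<otimes>\<^bsub>AJ\<^esub> (y, z) = \<zero>\<^bsub>AJ\<^esub>"
    using assms(3-5) by simp_all
  then show ?thesis
    using assms(1,2) unfolding zerodivisor_def by blast
qed

lemma zerodivisor_amalgamation_if_image:
  assumes "J \<subseteq> f ` carrier A" "zerodivisor A a" "(a, b) \<in> carrier AJ"
  shows "zerodivisor AJ (a, b)"
proof -
  obtain y where y: "y \<in> carrier A" "y \<noteq> \<zero>\<^bsub>A\<^esub>" "a \<otimes>\<^bsub>A\<^esub> y = \<zero>\<^bsub>A\<^esub>"
    using assms(2) unfolding zerodivisor_def by blast
  obtain j where "a \<in> carrier A" "j \<in> J" "b = f a \<oplus>\<^bsub>B\<^esub> j"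
    using assms(3) amalgamation_memE by blast
  then obtain c where ab: "a \<in> carrier A" "c \<in> carrier A" "f c \<in> J" "b = f a \<oplus>\<^bsub>B\<^esub> f c"
    using assms(1) by blast
  show ?thesis
  proof (cases "c \<otimes>\<^bsub>A\<^esub> y = \<zero>\<^bsub>A\<^esub>")
    case True
    have "b \<otimes>\<^bsub>B\<^esub> f y = f (a \<otimes>\<^bsub>A\<^esub> y) \<oplus>\<^bsub>B\<^esub> f (c \<otimes>\<^bsub>A\<^esub> y)"
      unfolding ab(4) hom_mult[OF ab(1) y(1)] hom_mult[OF ab(2) y(1)]
      using ab y hom_closed by algebra
    also have "\<dots> = \<zero>\<^bsub>B\<^esub>"
      using True y(3) by simp
    finally show ?thesis
      using zerodivisor_amalgamationI assms(3) diagonal_in_amalgamation y by blast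
  next
    case False
    have "\<zero>\<^bsub>B\<^esub> \<ominus>\<^bsub>B\<^esub> f (c \<otimes>\<^bsub>A\<^esub> y) = \<ominus>\<^bsub>B\<^esub> (f y \<otimes>\<^bsub>B\<^esub> f c)"
      using ab y hom_closed by (simp, algebra)
    then have "(c \<otimes>\<^bsub>A\<^esub> y, \<zero>\<^bsub>B\<^esub>) \<in> carrier AJ"
      using ab y by (simp add: carrier_amalgamation J.I_l_closed J.a_inv_closed)
    moreover have "a \<otimes>\<^bsub>A\<^esub> (c \<otimes>\<^bsub>A\<^esub> y) = \<zero>\<^bsub>A\<^esub>"
      using ab y by (simp add: R.m_lcomm[OF ab(1,2) y(1)])
    ultimately show ?thesis
      using zerodivisor_amalgamationI assms(3) False ab by simp
  qed
qed

lemma zerodivisor_amalgamation_if_torsion: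
  assumes "torsion_via A B f J" "zerodivisor A a" "(a, b) \<in> carrier AJ"
  shows "zerodivisor AJ (a, b)"
proof -
  obtain y where y: "y \<in> carrier A" "y \<noteq> \<zero>\<^bsub>A\<^esub>" "a \<otimes>\<^bsub>A\<^esub> y = \<zero>\<^bsub>A\<^esub>"
    using assms(2) unfolding zerodivisor_def by blast
  obtain j where ab: "a \<in> carrier A" "j \<in> J" "j \<in> carrier B" "b = f a \<oplus>\<^bsub>B\<^esub> j"
    using assms(3) amalgamation_memE by blast
  obtain s where s: "non_zerodivisor A s" "f s \<otimes>\<^bsub>B\<^esub> j = \<zero>\<^bsub>B\<^esub>"
    using assms(1) ab(2) unfolding torsion_via_def by blast
  have sc: "s \<in> carrier A" and ys: "y \<otimes>\<^bsub>A\<^esub> s \<noteq> \<zero>\<^bsub>A\<^esub>"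
    using s(1) y(1,2) R.m_comm[OF y(1)] unfolding non_zerodivisor_def by auto
  have "b \<otimes>\<^bsub>B\<^esub> f (y \<otimes>\<^bsub>A\<^esub> s) = f (a \<otimes>\<^bsub>A\<^esub> y) \<otimes>\<^bsub>B\<^esub> f s \<oplus>\<^bsub>B\<^esub> f y \<otimes>\<^bsub>B\<^esub> (f s \<otimes>\<^bsub>B\<^esub> j)"
    unfolding ab(4) hom_mult[OF y(1) sc] hom_mult[OF ab(1) y(1)]
    using ab y sc hom_closed by algebra
  also have "\<dots> = \<zero>\<^bsub>B\<^esub>"
    using s(2) y sc by simp
  finally have "b \<otimes>\<^bsub>B\<^esub> f (y \<otimes>\<^bsub>A\<^esub> s) = \<zero>\<^bsub>B\<^esub>" .
  moreover have "a \<otimes>\<^bsub>A\<^esub> (y \<otimes>\<^bsub>A\<^esub> s) = \<zero>\<^bsub>A\<^esub>"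
    using ab y sc by (simp add: R.m_assoc[symmetric])
  moreover have "(y \<otimes>\<^bsub>A\<^esub> s, f (y \<otimes>\<^bsub>A\<^esub> s)) \<in> carrier AJ"
    using diagonal_in_amalgamation[OF R.m_closed[OF y(1) sc]] .
  ultimately show ?thesis
    using zerodivisor_amalgamationI assms(3) ys by blast
qed

lemma total_ring_of_fractions_amalgamation:
  assumes "total_ring_of_fractions A" "J \<subseteq> jacobson_radical B"
    and "J \<subseteq> f ` carrier A \<or> torsion_via A B f J"
  shows "total_ring_of_fractions AJ"
  unfolding total_ring_of_fractions_def
proof (intro conjI ballI cring_amalgamation)
  fix x assume x: "x \<in> carrier AJ"
  then obtain a b where ab: "x = (a, b)" "a \<in> carrier A"
    by (auto simp: carrier_amalgamation)
  then consider "a \<in> Units A" | "zerodivisor A a"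
    using assms(1) unfolding total_ring_of_fractions_def by blast
  then show "x \<in> Units AJ \<or> zerodivisor AJ x"
  proof cases
    case 1
    then show ?thesis
      using Units_amalgamation assms(2) x unfolding ab(1) by blast
  next
    case 2
    then show ?thesis
      using zerodivisor_amalgamation_if_image zerodivisor_amalgamation_if_torsion assms(3) x
      unfolding ab(1) by blast
  qed
qed

end

theorem proposition4p6:
  fixes A :: "('a, 'c) ring_scheme" and B :: "('b, 'd) ring_scheme"
    and f :: "'a \<Rightarrow> 'b" and J :: "'b set"
  assumes "total_ring_of_fractions A"
    and "cring B"
    and "f \<in> ring_hom A B"
    and "ideal J B"
    and "J \<subseteq> jacobson_radical B"
    and "J \<subseteq> f ` carrier A \<or> torsion_via A B f J"
  shows "total_ring_of_fractions (amalgamation A B f J) \<and> pruefer_ring (amalgamation A B f J)"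
proof -
  have "amalgamation_data A B f J"
    using assms(1-4) unfolding amalgamation_data_def ring_hom_cring_def
      ring_hom_cring_axioms_def total_ring_of_fractions_def by blast
  then have "total_ring_of_fractions (amalgamation A B f J)"
    using amalgamation_data.total_ring_of_fractions_amalgamation assms(1,5,6) by blast
  then show ?thesis
    using total_ring_of_fractions_imp_pruefer_ring by blast
qed

end
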